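(* Let $X$ be a non-negative absolutely continuous random variable with PDF $f$, let $r>0$ and let $X_{e,r}$ be the escort random variable of order $r$, with PDF $f_{e,r}(x)=\frac{f^r(x)}{\int_0^\infty f^r(t)\,dt}$, $x>0$. Then, for $0<\alpha<\infty$, $\alpha\neq1$, $\beta>0$, with $r\ne1$ and $\alpha r\ne 1$, $$R^\alpha_\beta(X_{e,r})=\frac{1-\alpha r}{(1-\alpha)(1-r)}\cdot\frac{R^{\alpha r}_\beta(X)}{R^r_{\alpha\beta-\alpha+1}(X)}.$$
   Context: For a non-negative absolutely continuous random variable $Z$ with PDF $h$, $0<a<\infty$, $a\ne1$, $b>0$, the Rényi information generating function is $R^a_b(Z)=\frac{1}{1-a}\left(\int_0^\infty h^a(x)\,dx\right)^{b-1}$. All integrals are assumed to exist and be finite (and nonzero where they appear in denominators). *)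

theory Defs
  imports "HOL-Analysis.Analysis"
begin

definition pos_integral :: "(real \<Rightarrow> real) \<Rightarrow> real" where
  "pos_integral g = (LINT x:{0<..}|lborel. g x)"

definition renyi_igf :: "real \<Rightarrow> real \<Rightarrow> (real \<Rightarrow> real) \<Rightarrow> real" where
  "renyi_igf a b h = (1 / (1 - a)) * (pos_integral (\<lambda>x. h x powr a)) powr (b - 1)"

definition escort_pdf :: "real \<Rightarrow> (real \<Rightarrow> real) \<Rightarrow> real \<Rightarrow> real" where
  "escort_pdf r f x = f x powr r / pos_integral (\<lambda>t. f t powr r)"

definition nonneg_pdf :: "(real \<Rightarrow> real) \<Rightarrow> bool" where
  "nonneg_pdf f \<longleftrightarrow> f \<in> borel_measurable lborel \<and> (\<forall>x. 0 \<le> f x) \<and> (\<forall>x<0. f x = 0)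
     \<and> set_integrable lborel {0<..} f \<and> pos_integral f = 1"

end

theory Submission
  imports Defs
begin

text \<open>With \<open>I = \<integral> f powr r\<close> and \<open>J = \<integral> f powr (\<alpha> r)\<close>, the escort density raised to
  the power \<open>\<alpha>\<close> is \<open>f powr (\<alpha> r) / I powr \<alpha>\<close>, whose integral is \<open>J / I powr \<alpha>\<close>. Both sides
  of the identity are therefore constants times \<open>J powr (\<beta> - 1) / I powr (\<alpha> (\<beta> - 1))\<close>: the
  numerator \<open>R\<^sup>\<alpha>\<^sup>r\<^sub>\<beta>(X)\<close> supplies the power of \<open>J\<close>, the denominator the power of \<open>I\<close>.\<close>

lemma pos_integral_divide: "pos_integral (\<lambda>x. g x / c) = pos_integral g / c"
  unfolding pos_integral_def by simp

lemma escort_pdf_powr: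
  "escort_pdf r f x powr a = f x powr (a * r) / pos_integral (\<lambda>t. f t powr r) powr a"
  unfolding escort_pdf_def by (simp add: powr_divide powr_powr mult.commute)

lemma renyi_igf_escort_pdf:
  "renyi_igf a b (escort_pdf r f) =
     1 / (1 - a) * pos_integral (\<lambda>x. f x powr (a * r)) powr (b - 1)
       / pos_integral (\<lambda>x. f x powr r) powr (a * (b - 1))"
  unfolding renyi_igf_def escort_pdf_powr pos_integral_divide
  by (simp add: powr_divide powr_powr)

theorem proposition2p7:
  fixes f :: "real \<Rightarrow> real" and r \<alpha> \<beta> :: real
  assumes "nonneg_pdf f"
    and "r > 0" and "r \<noteq> 1"
    and "0 < \<alpha>" and "\<alpha> \<noteq> 1" and "\<beta> > 0" and "\<alpha> * r \<noteq> 1"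
    and "set_integrable lborel {0<..} (\<lambda>x. f x powr r)"
    and "set_integrable lborel {0<..} (\<lambda>x. f x powr (\<alpha> * r))"
    and "pos_integral (\<lambda>x. f x powr r) \<noteq> 0"
    and "pos_integral (\<lambda>x. f x powr (\<alpha> * r)) \<noteq> 0"
  shows "renyi_igf \<alpha> \<beta> (escort_pdf r f) =
     (1 - \<alpha> * r) / ((1 - \<alpha>) * (1 - r)) *
     (renyi_igf (\<alpha> * r) \<beta> f / renyi_igf r (\<alpha> * \<beta> - \<alpha> + 1) f)"
proof -
  define I where "I = pos_integral (\<lambda>x. f x powr r)"
  define J where "J = pos_integral (\<lambda>x. f x powr (\<alpha> * r))"
  have "I powr (\<alpha> * (\<beta> - 1)) \<noteq> 0"
    using \<open>pos_integral (\<lambda>x. f x powr r) \<noteq> 0\<close> by (simp add: I_def)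
  moreover have "1 - r \<noteq> 0" "1 - \<alpha> * r \<noteq> 0" "1 - \<alpha> \<noteq> 0"
    using assms by auto
  moreover have "\<alpha> * \<beta> - \<alpha> + 1 - 1 = \<alpha> * (\<beta> - 1)"
    by algebra
  ultimately show ?thesis
    unfolding renyi_igf_escort_pdf
    unfolding renyi_igf_def I_def[symmetric] J_def[symmetric]
    by (simp only:) (simp add: divide_simps)
qed

end
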